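(* For points $P=(x,y)$, $Q=(x',y')$ in $\mathbb{R}^2$ with $xx'+yy'\leq 1$ define $\delta(P,Q)=\sqrt{2-2xx'-2yy'}$. Let $A_1=(0,-1)$ and let $B_1=(x_1,y_1)$, $C_1=(x_2,y_2)$, $D_1=(x_3,y_3)\in[-1,1]\times[-1,1]$ satisfy: (i) $x_1^2+y_1^2=1$, $|x_1-1|\leq 1/25$, $|y_1|\leq 7/25$; (ii) $x_2^2+y_2^2=1$, $|x_2+1|\leq 1/25$, $|y_2|\leq 7/25$; (iii) $|x_3|\leq 7/25$, $|y_3-1|\leq 1/25$; (iv) the triangle $A_1B_1C_1$ contains $O=(0,0)$ in its interior or on its edges. Then $$\delta(A_1,B_1)+\delta(B_1,C_1)+\delta(C_1,A_1)+\delta(A_1,D_1)+\delta(B_1,D_1)+\delta(C_1,D_1)\leq 4+4\sqrt{2},$$ and equality holds if and only if $B_1=(1,0)$, $C_1=(-1,0)$, $D_1=(0,1)$. *)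

theory Defs
  imports "HOL-Analysis.Analysis"
begin

text \<open>delta(P,Q) = sqrt(2 - 2xx' - 2yy'); the paper uses it only when xx'+yy' <= 1,
which holds for all pairs occurring in theorem3 under its hypotheses.\<close>
definition delta :: "real \<times> real \<Rightarrow> real \<times> real \<Rightarrow> real" where
  "delta P Q = sqrt (2 - 2 * fst P * fst Q - 2 * snd P * snd Q)"

end

theory Submission
  imports Defs
begin

(*
  Write A = A_1, B = B_1, C = C_1, D = D_1. Apart from delta(B,C) <= 2, only the three edges at D
  need work. Bound each of them by AM-GM, sqrt u <= (w + u/w)/2, with w its value at the
  extremal configuration: w = 2 for AD, sqrt 2 * x_1 for BD, -sqrt 2 * x_2 for CD. In the sum of
  these bounds x_3 cancels, and one gets
    delta(A,B) + delta(C,A) + [edges at D]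
      <= 2 + W(x_1,y_1) + W(-x_2,y_2) - (1 - y_3) (1 - sqrt 2 (y_1/x_1 - y_2/x_2)) / 2
  with W(x,y) = sqrt(2 + 2y) + (x + (1 - y)/x) / sqrt 2. The last term is nonnegative since the
  slopes y_i/x_i are small. Substituting a = sqrt(1 + y), b = sqrt(1 - y) turns W <= 2 sqrt 2
  into 2a^2 + a^2 b + b <= 4a on a^2 + b^2 = 2, which holds because
  (4a - 2a^2)^2 - b^2 (a^2 + 1)^2 = (a - 1)^2 (a^4 + 2a^3 + 7a^2 - 4a - 2).
*)

lemma quartic_pos:
  fixes a :: real
  assumes "4/5 \<le> a"
  shows "0 < a^4 + 2*a^3 + 7*a^2 - 4*a - 2"
proof -
  have "64/125 \<le> a^3"
    using power_mono[OF assms, of 3] by (simp add: power3_eq_cube)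
  moreover have "324/1225 \<le> (a - 2/7)^2"
    using power_mono[of "4/5 - 2/7" "a - 2/7" 2] assms by (simp add: power2_eq_square)
  moreover have "7*a^2 - 4*a - 2 = 7*(a - 2/7)^2 - 18/7"
    by (simp add: power2_eq_square algebra_simps)
  moreover have "0 \<le> a^4" by simp
  ultimately show ?thesis by linarith
qed

lemma cubic_le_on_circle:
  fixes a b :: real
  assumes "0 \<le> b" "a^2 + b^2 = 2" "4/5 \<le> a"
  shows "2*a^2 + a^2*b + b \<le> 4*a"
    and "2*a^2 + a^2*b + b = 4*a \<Longrightarrow> a = 1"
proof -
  have Q: "0 < a^4 + 2*a^3 + 7*a^2 - 4*a - 2" using quartic_pos assms(3) .
  have b2: "b^2 = 2 - a^2" using assms(2) by simp
  have factor:
    "(4*a - 2*a^2)^2 - (b*(a^2 + 1))^2 = (a - 1)^2 * (a^4 + 2*a^3 + 7*a^2 - 4*a - 2)"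
    unfolding power_mult_distrib b2
    by (simp add: power2_eq_square eval_nat_numeral algebra_simps)
  have "a^2 \<le> 2" using assms(2) zero_le_power2[of b] by linarith
  then have "a < 2" using power2_less_imp_less[of a 2] by simp
  then have "0 \<le> a * (4 - 2*a)" using assms(3) by simp
  then have "0 \<le> 4*a - 2*a^2" by (simp add: power2_eq_square algebra_simps)
  moreover have "(b*(a^2 + 1))^2 \<le> (4*a - 2*a^2)^2"
    using factor Q by (smt (verit) mult_nonneg_nonneg zero_le_power2)
  ultimately have "b*(a^2 + 1) \<le> 4*a - 2*a^2" using power2_le_imp_le by blast
  then show "2*a^2 + a^2*b + b \<le> 4*a" by (simp add: algebra_simps)
  assume "2*a^2 + a^2*b + b = 4*a"
  then have "b*(a^2 + 1) = 4*a - 2*a^2" by (simp add: algebra_simps)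
  then have "(a - 1)^2 * (a^4 + 2*a^3 + 7*a^2 - 4*a - 2) = 0" using factor by simp
  then show "a = 1" using Q by simp
qed

definition arc_weight :: "real \<Rightarrow> real \<Rightarrow> real" where
  "arc_weight x y = sqrt (2 + 2*y) + sqrt 2 / 2 * (x + (1 - y) / x)"

lemma arc_weight_le:
  fixes x y :: real
  assumes "0 < x" "x^2 + y^2 = 1" "-9/25 \<le> y"
  shows "arc_weight x y \<le> 2 * sqrt 2"
    and "arc_weight x y = 2 * sqrt 2 \<Longrightarrow> y = 0"
proof -
  define a b where "a = sqrt (1 + y)" and "b = sqrt (1 - y)"
  have "y^2 \<le> 1" using assms(2) zero_le_power2[of x] by linarith
  then have "y \<le> 1" using abs_le_square_iff[of y 1] by simp
  then have a2: "a^2 = 1 + y" and b2: "b^2 = 1 - y" and "0 \<le> a" "0 \<le> b"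
    using assms(3) by (simp_all add: a_def b_def)
  have "(a*b)^2 = x^2"
    unfolding power_mult_distrib a2 b2 using assms(2) by (simp add: power2_eq_square algebra_simps)
  then have x: "x = a*b" using \<open>0 \<le> a\<close> \<open>0 \<le> b\<close> assms(1)
    by (metis mult_nonneg_nonneg less_imp_le power2_eq_imp_eq)
  have "(4/5)^2 \<le> a^2" using a2 assms(3) by (simp add: power2_eq_square)
  then have a: "4/5 \<le> a" using \<open>0 \<le> a\<close> by (rule power2_le_imp_le)
  have "0 < b" using x assms(1) \<open>0 \<le> b\<close> by (metis mult_zero_right order_le_less)
  have root: "sqrt (2 + 2*y) = sqrt 2 * a"
    using assms(3) by (simp add: a_def real_sqrt_mult[symmetric] algebra_simps)
  have ratio: "(1 - y) / (a*b) = b / a"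
    using \<open>0 < b\<close> by (simp flip: b2) (simp add: power2_eq_square)
  have weight: "arc_weight x y = sqrt 2 / (2*a) * (2*a^2 + a^2*b + b)"
    unfolding arc_weight_def x root ratio using a by (simp add: field_simps power2_eq_square)
  have circle: "a^2 + b^2 = 2" using a2 b2 by simp
  have scale: "2 * sqrt 2 = sqrt 2 / (2*a) * (4*a)" and pos: "0 < sqrt 2 / (2*a)"
    using a by simp_all
  show "arc_weight x y \<le> 2 * sqrt 2"
    unfolding weight scale
    using cubic_le_on_circle(1)[OF \<open>0 \<le> b\<close> circle a] less_imp_le[OF pos]
    by (rule mult_left_mono)
  assume "arc_weight x y = 2 * sqrt 2"
  then have "2*a^2 + a^2*b + b = 4*a"
    unfolding weight scale using pos by (subst (asm) mult_left_cancel) auto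
  then have "a = 1" using cubic_le_on_circle(2)[OF \<open>0 \<le> b\<close> circle a] by simp
  then show "y = 0" using a2 by simp
qed

(* Each squared term is an AM-GM gap: (w - sqrt u)^2 / (2w) = (w + u/w)/2 - sqrt u. *)
lemma five_delta_sum_eq:
  fixes x1 y1 x2 y2 x3 y3 :: real
  assumes "x1 \<noteq> 0" "x2 \<noteq> 0" "-1 \<le> y3" "x1*x3 + y1*y3 \<le> 1" "x2*x3 + y2*y3 \<le> 1"
  shows "delta (0, -1) (x1, y1) + delta (x2, y2) (0, -1)
      + delta (0, -1) (x3, y3) + delta (x1, y1) (x3, y3) + delta (x2, y2) (x3, y3)
    = 2 + arc_weight x1 y1 + arc_weight (-x2) y2 - (1 - y3) * (1 - sqrt 2 * (y1/x1 - y2/x2)) / 2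
      - (2 - delta (0, -1) (x3, y3))^2 / 4
      - (sqrt 2 * x1 - delta (x1, y1) (x3, y3))^2 / (2 * sqrt 2 * x1)
      - (sqrt 2 * (-x2) - delta (x2, y2) (x3, y3))^2 / (2 * sqrt 2 * (-x2))"
proof -
  define r dAD dBD dCD where "r = sqrt 2" and "dAD = delta (0, -1) (x3, y3)"
    and "dBD = delta (x1, y1) (x3, y3)" and "dCD = delta (x2, y2) (x3, y3)"
  have "dAD^2 = 2 + 2*y3" "dBD^2 = 2 - 2*x1*x3 - 2*y1*y3" "dCD^2 = 2 - 2*x2*x3 - 2*y2*y3"
    using assms(3-5) by (simp_all add: dAD_def dBD_def dCD_def delta_def)
  moreover have "r^2 = 2" "r \<noteq> 0" by (simp_all add: r_def)
  ultimately show ?thesis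
    unfolding arc_weight_def r_def[symmetric]
      dAD_def[symmetric] dBD_def[symmetric] dCD_def[symmetric]
    using assms(1,2) by (simp add: delta_def field_simps) algebra
qed

lemma five_delta_sum_le:
  fixes x1 y1 x2 y2 x3 y3 :: real
  assumes "0 < x1" "x2 < 0" "-1 \<le> y3" "y3 \<le> 1" "x1*x3 + y1*y3 \<le> 1" "x2*x3 + y2*y3 \<le> 1"
    and slopes: "0 < 1 - sqrt 2 * (y1/x1 - y2/x2)"
  defines "S \<equiv> delta (0, -1) (x1, y1) + delta (x2, y2) (0, -1)
      + delta (0, -1) (x3, y3) + delta (x1, y1) (x3, y3) + delta (x2, y2) (x3, y3)"
  shows "S \<le> 2 + arc_weight x1 y1 + arc_weight (-x2) y2"
    and "S = 2 + arc_weight x1 y1 + arc_weight (-x2) y2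
      \<Longrightarrow> y3 = 1 \<and> delta (x1, y1) (x3, y3) = sqrt 2 * x1"
proof -
  have slack: "0 \<le> (1 - y3) * (1 - sqrt 2 * (y1/x1 - y2/x2)) / 2"
    "0 \<le> (2 - delta (0, -1) (x3, y3))^2 / 4"
    using assms(4) slopes by simp_all
  have gaps: "0 \<le> (sqrt 2 * x1 - delta (x1, y1) (x3, y3))^2 / (2 * sqrt 2 * x1)"
    "0 \<le> (sqrt 2 * (-x2) - delta (x2, y2) (x3, y3))^2 / (2 * sqrt 2 * (-x2))"
    by (rule divide_nonneg_pos[OF zero_le_power2];
        use assms(1,2) in \<open>simp add: mult_neg_pos\<close>)+
  have identity: "S = 2 + arc_weight x1 y1 + arc_weight (-x2) y2
      - (1 - y3) * (1 - sqrt 2 * (y1/x1 - y2/x2)) / 2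
      - (2 - delta (0, -1) (x3, y3))^2 / 4
      - (sqrt 2 * x1 - delta (x1, y1) (x3, y3))^2 / (2 * sqrt 2 * x1)
      - (sqrt 2 * (-x2) - delta (x2, y2) (x3, y3))^2 / (2 * sqrt 2 * (-x2))"
    unfolding S_def using assms(1,2) by (intro five_delta_sum_eq assms(3,5,6)) auto
  show "S \<le> 2 + arc_weight x1 y1 + arc_weight (-x2) y2" using identity slack gaps by linarith
  assume "S = 2 + arc_weight x1 y1 + arc_weight (-x2) y2"
  then have "(1 - y3) * (1 - sqrt 2 * (y1/x1 - y2/x2)) / 2 = 0"
    and "(sqrt 2 * x1 - delta (x1, y1) (x3, y3))^2 / (2 * sqrt 2 * x1) = 0"
    using identity slack gaps by linarith+
  then show "y3 = 1 \<and> delta (x1, y1) (x3, y3) = sqrt 2 * x1" using assms(1) slopes by simp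
qed

lemma delta_le_two:
  fixes x y x' y' :: real
  assumes "x^2 + y^2 = 1" "x'^2 + y'^2 = 1"
  shows "delta (x, y) (x', y') \<le> 2"
proof -
  have "2 - 2*x*x' - 2*y*y' = 4 - (x + x')^2 - (y + y')^2"
    using assms by (simp add: power2_eq_square algebra_simps)
  then have "2 - 2*x*x' - 2*y*y' \<le> 2^2"
    using zero_le_power2[of "x + x'"] zero_le_power2[of "y + y'"] by simp
  then have "sqrt (2 - 2*x*x' - 2*y*y') \<le> sqrt (2^2)" by (rule real_sqrt_le_mono)
  then show ?thesis by (simp add: delta_def)
qed

lemma mult_le_of_abs_le:
  fixes a b c d :: real
  assumes "\<bar>a\<bar> \<le> c" "\<bar>b\<bar> \<le> d"
  shows "a * b \<le> c * d"
proof -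
  have "\<bar>a\<bar> * \<bar>b\<bar> \<le> c * d" using assms by (intro mult_mono) auto
  then show ?thesis by (metis abs_ge_self abs_mult order_trans)
qed

lemma slope_term_pos:
  fixes x1 y1 x2 y2 :: real
  assumes "24/25 \<le> \<bar>x1\<bar>" "\<bar>y1\<bar> \<le> 7/25" "24/25 \<le> \<bar>x2\<bar>" "\<bar>y2\<bar> \<le> 7/25"
  shows "0 < 1 - sqrt 2 * (y1/x1 - y2/x2)"
proof -
  have "\<bar>y1/x1\<bar> \<le> 7/24" "\<bar>y2/x2\<bar> \<le> 7/24"
    unfolding abs_divide using frac_le[of "7/25" "\<bar>y1\<bar>" "24/25" "\<bar>x1\<bar>"]
      frac_le[of "7/25" "\<bar>y2\<bar>" "24/25" "\<bar>x2\<bar>"] assms by simp_all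
  then have "y1/x1 - y2/x2 \<le> 7/12"
    using abs_ge_self[of "y1/x1"] abs_ge_minus_self[of "y2/x2"] by linarith
  then have "sqrt 2 * (y1/x1 - y2/x2) \<le> sqrt 2 * (7/12)" by (rule mult_left_mono) simp
  also have "sqrt 2 < sqrt ((12/7)^2)" by (rule real_sqrt_less_mono) (simp add: power2_eq_square)
  then have "sqrt 2 * (7/12) < 1" by simp
  finally show ?thesis by simp
qed

theorem theorem3:
  fixes x1 y1 x2 y2 x3 y3 :: real
  assumes box: "\<bar>x1\<bar> \<le> 1" "\<bar>y1\<bar> \<le> 1" "\<bar>x2\<bar> \<le> 1" "\<bar>y2\<bar> \<le> 1"
      "\<bar>x3\<bar> \<le> 1" "\<bar>y3\<bar> \<le> 1"
    and i: "x1^2 + y1^2 = 1" "\<bar>x1 - 1\<bar> \<le> 1/25" "\<bar>y1\<bar> \<le> 7/25"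
    and ii: "x2^2 + y2^2 = 1" "\<bar>x2 + 1\<bar> \<le> 1/25" "\<bar>y2\<bar> \<le> 7/25"
    and iii: "\<bar>x3\<bar> \<le> 7/25" "\<bar>y3 - 1\<bar> \<le> 1/25"
    and iv: "(0::real, 0::real) \<in> convex hull {(0, -1), (x1, y1), (x2, y2)}"
  shows "(delta (0, -1) (x1, y1) + delta (x1, y1) (x2, y2) + delta (x2, y2) (0, -1)
           + delta (0, -1) (x3, y3) + delta (x1, y1) (x3, y3) + delta (x2, y2) (x3, y3)
         \<le> 4 + 4 * sqrt 2) \<and>
       ((delta (0, -1) (x1, y1) + delta (x1, y1) (x2, y2) + delta (x2, y2) (0, -1)
           + delta (0, -1) (x3, y3) + delta (x1, y1) (x3, y3) + delta (x2, y2) (x3, y3)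
         = 4 + 4 * sqrt 2
       \<longleftrightarrow> (x1 = 1 \<and> y1 = 0 \<and> x2 = -1 \<and> y2 = 0 \<and> x3 = 0 \<and> y3 = 1)))"
proof -
  have x: "0 < x1" "x2 < 0" "24/25 \<le> \<bar>x1\<bar>" "24/25 \<le> \<bar>x2\<bar>"
    using i(2) ii(2) by (auto simp: abs_if split: if_splits)
  have y3: "-1 \<le> y3" "y3 \<le> 1" using box(6) by auto
  have inner: "x1*x3 + y1*y3 \<le> 1" "x2*x3 + y2*y3 \<le> 1"
    using mult_le_of_abs_le[OF box(1) iii(1)] mult_le_of_abs_le[OF i(3) box(6)]
      mult_le_of_abs_le[OF box(3) iii(1)] mult_le_of_abs_le[OF ii(3) box(6)] by linarith+
  note D = five_delta_sum_le[OF x(1,2) y3 inner slope_term_pos[OF x(3) i(3) x(4) ii(3)]]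
  have "-9/25 \<le> y1" "-9/25 \<le> y2" "0 < -x2" "(-x2)^2 + y2^2 = 1"
    using i(3) ii(1,3) x(2) by auto
  note W1 = arc_weight_le[OF x(1) i(1) this(1)]
    and W2 = arc_weight_le[OF this(3,4,2)]
  have BC: "delta (x1, y1) (x2, y2) \<le> 2" using delta_le_two[OF i(1) ii(1)] .
  let ?S = "delta (0, -1) (x1, y1) + delta (x1, y1) (x2, y2) + delta (x2, y2) (0, -1)
    + delta (0, -1) (x3, y3) + delta (x1, y1) (x3, y3) + delta (x2, y2) (x3, y3)"
  have "?S \<le> 4 + 4 * sqrt 2" using D(1) W1(1) W2(1) BC by linarith
  moreover have "x1 = 1 \<and> y1 = 0 \<and> x2 = -1 \<and> y2 = 0 \<and> x3 = 0 \<and> y3 = 1"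
    if eq: "?S = 4 + 4 * sqrt 2"
  proof -
    have "y1 = 0" by (rule W1(2)) (use eq D(1) W1(1) W2(1) BC in linarith)
    moreover have "y2 = 0" by (rule W2(2)) (use eq D(1) W1(1) W2(1) BC in linarith)
    moreover have "y3 = 1 \<and> delta (x1, y1) (x3, y3) = sqrt 2 * x1"
      by (rule D(2)) (use eq D(1) W1(1) W2(1) BC in linarith)
    moreover from calculation have "x1 = 1" "x2 = -1"
      using i(1) ii(1) x(1,2) by (auto simp: power2_eq_1_iff)
    ultimately show ?thesis by (simp add: delta_def)
  qed
  moreover have "?S = 4 + 4 * sqrt 2"
    if "x1 = 1 \<and> y1 = 0 \<and> x2 = -1 \<and> y2 = 0 \<and> x3 = 0 \<and> y3 = 1" using that by (simp add: delta_def)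
  ultimately show ?thesis by blast
qed

end
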